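(* Suppose the reals $e^1_{j,n},e^2_{j,n},v_{j,n}$ ($0\le j\le J$, $1\le n\le N$) and $d^1_{j,n},d^2_{j,n}$ ($0\le j\le J$, $1\le n\le N-1$) satisfy constraints (ii) and (iii) of the context. Let $\bar e^1_n,\bar e^2_n,\bar v_n$ be the linear interpolations on $[0,x_J]$ of $(e^1_{j,n})_j,(e^2_{j,n})_j,(v_{j,n})_j$, and $\tilde d^1_n,\tilde d^2_n$ the mixed interpolations of $(d^1_{j,n})_j,(d^2_{j,n})_j$. Then for all $1\le n\le N-1$ and all $0\le x,y\le x_J$, \[ \bar e^1_n(x)+\bar e^2_{n+1}(y)+(y-x)\tilde d^1_n(x)\ge0, \] \[ \bar e^1_n(x)+\bar e^2_{n+1}(y)+(y-x)\tilde d^2_n(x)-\bar v_n(x)+\bar v_{n+1}(y)\ge0. \]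
   Context: Let $0=x_0<x_1<\dots<x_J$ and $N\ge1$. Constraints: (ii) $e^1_{j,n}+e^2_{k,n+1}+(x_k-x_j)d^1_{j,n}\ge0$ and (iii) $e^1_{j,n}+e^2_{k,n+1}+(x_k-x_j)d^2_{j,n}-v_{j,n}+v_{k,n+1}\ge0$ for all $0\le j,k\le J$, $1\le n\le N-1$. Linear interpolation of $(h_j)_{0\le j\le J}$: $\bar h(x)=\frac{x_{j+1}-x}{x_{j+1}-x_j}h_j+\frac{x-x_j}{x_{j+1}-x_j}h_{j+1}$ for $x_j\le x\le x_{j+1}$, $0\le j<J$. Mixed interpolation: for $\delta\in\{1,2\}$ and $1\le n\le N-1$ let $u^1_{j,n}=\frac{e^1_{j+1,n}-e^1_{j,n}}{x_{j+1}-x_j}$ and $u^2_{j,n}=\frac{(e^1_{j+1,n}-v_{j+1,n})-(e^1_{j,n}-v_{j,n})}{x_{j+1}-x_j}$. Define $\tilde d^\delta_n(x_j)=d^\delta_{j,n}$ and, for $x\in(x_j,x_{j+1})$: $\tilde d^\delta_n(x)=d^\delta_{j,n}$ if $d^\delta_{j,n}\le u^\delta_{j,n}$; $\tilde d^\delta_n(x)=d^\delta_{j+1,n}$ if $d^\delta_{j,n}>u^\delta_{j,n}$ and $d^\delta_{j+1,n}\ge u^\delta_{j,n}$; $\tilde d^\delta_n(x)=u^\delta_{j,n}$ if $d^\delta_{j+1,n}<u^\delta_{j,n}<d^\delta_{j,n}$. *)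

theory Defs
  imports "HOL-Analysis.Analysis"
begin

text \<open>On a cell [xs j, xs (j+1)] it is the affine interpolant; at shared nodes both
  formulas agree, so any choice of cell containing x gives the same value.\<close>
definition lin_interp :: "(nat \<Rightarrow> real) \<Rightarrow> nat \<Rightarrow> (nat \<Rightarrow> real) \<Rightarrow> real \<Rightarrow> real" where
  "lin_interp xs J h x =
     (if \<exists>j\<le>J. x = xs j then h (SOME j. j \<le> J \<and> x = xs j) else
      let j = (SOME j. j < J \<and> xs j \<le> x \<and> x \<le> xs (Suc j)) in
        (xs (Suc j) - x) / (xs (Suc j) - xs j) * h j
      + (x - xs j) / (xs (Suc j) - xs j) * h (Suc j))"

definition mixed_interp :: "(nat \<Rightarrow> real) \<Rightarrow> nat \<Rightarrow> (nat \<Rightarrow> real) \<Rightarrow> (nat \<Rightarrow> real) \<Rightarrow> real \<Rightarrow> real" where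
  "mixed_interp xs J d u x =
     (if \<exists>j\<le>J. x = xs j then d (SOME j. j \<le> J \<and> x = xs j)
      else (let j = (SOME j. j < J \<and> xs j < x \<and> x < xs (Suc j)) in
              if d j \<le> u j then d j
              else if u j \<le> d (Suc j) then d (Suc j)
              else u j))"

end

theory Submission
  imports Defs
begin

text \<open>For fixed x both expressions are affine in the pair (y, ebar2(y)) on each cell, so it
  suffices to check them at the grid nodes y = x_k. If x is a node as well, this is the discrete
  constraint. If x lies inside a cell (x_j, x_(j+1)), the interpolant ebar1 has slope u_j there, and
  each of the three values chosen by the mixed interpolation turns the expression into the
  constraint at x_j or at x_(j+1) plus a nonnegative term; for the choice u_j this uses that the
  node x_k lies outside the open cell. The second inequality is the first one applied to e1 - v
  and e2 + v.\<close>

lemma lin_interp_add: "lin_interp xs J (\<lambda>j. a j + b j) x = lin_interp xs J a x + lin_interp xs J b x"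
proof (cases "\<exists>j\<le>J. x = xs j")
  case True
  then show ?thesis unfolding lin_interp_def if_P[OF True] by simp
next
  case False
  then show ?thesis unfolding lin_interp_def Let_def if_not_P[OF False]
    by (simp add: algebra_simps diff_divide_distrib add_divide_distrib)
qed

lemma lin_interp_diff: "lin_interp xs J (\<lambda>j. a j - b j) x = lin_interp xs J a x - lin_interp xs J b x"
proof (cases "\<exists>j\<le>J. x = xs j")
  case True
  then show ?thesis unfolding lin_interp_def if_P[OF True] by simp
next
  case False
  then show ?thesis unfolding lin_interp_def Let_def if_not_P[OF False]
    by (simp add: algebra_simps diff_divide_distrib add_divide_distrib)
qed

lemma mixed_choice_nonneg:
  fixes a b x c e0 e1 f d0 d1 :: real
  assumes "a < x" "x < b" "c \<le> a \<or> b \<le> c"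
    and at_a: "e0 + f + (c - a) * d0 \<ge> 0" and at_b: "e1 + f + (c - b) * d1 \<ge> 0"
  defines "u \<equiv> (e1 - e0) / (b - a)"
  shows "(b - x) / (b - a) * e0 + (x - a) / (b - a) * e1 + f
           + (c - x) * (if d0 \<le> u then d0 else if u \<le> d1 then d1 else u) \<ge> 0"
proof -
  have ba: "b - a \<noteq> 0" using assms(1,2) by simp
  have e1: "e1 = e0 + (b - a) * u" using ba by (simp add: u_def)
  have "(b - x) / (b - a) + (x - a) / (b - a) = 1"
    using ba by (simp add: add_divide_distrib[symmetric])
  then have "(b - x) / (b - a) * e0 + (x - a) / (b - a) * e0 = e0"
    by (metis distrib_right mult_1)
  moreover have "(x - a) / (b - a) * ((b - a) * u) = (x - a) * u"
    using ba by simp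
  ultimately have interp: "(b - x) / (b - a) * e0 + (x - a) / (b - a) * e1 = e0 + (x - a) * u"
    unfolding e1 by (simp add: distrib_left)
  consider "d0 \<le> u" | "u < d0" "u \<le> d1" | "u < d0" "d1 < u" by linarith
  then show ?thesis
  proof cases
    case 1
    have "e0 + (x - a) * u + f + (c - x) * d0 = (e0 + f + (c - a) * d0) + (x - a) * (u - d0)"
      by (simp add: algebra_simps)
    moreover have "(x - a) * (u - d0) \<ge> 0" using 1 assms(1) by simp
    ultimately show ?thesis using 1 at_a interp by simp
  next
    case 2
    have "e0 + (x - a) * u + f + (c - x) * d1 = (e1 + f + (c - b) * d1) + (b - x) * (d1 - u)"
      unfolding e1 by (simp add: algebra_simps)
    moreover have "(b - x) * (d1 - u) \<ge> 0" using 2 assms(2) by simp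
    ultimately show ?thesis using 2 at_b interp by simp
  next
    case 3
    have "e0 + (x - a) * u + f + (c - x) * u = (e0 + f + (c - a) * d0) + (a - c) * (d0 - u)"
      "e0 + (x - a) * u + f + (c - x) * u = (e1 + f + (c - b) * d1) + (c - b) * (u - d1)"
      unfolding e1 by (simp_all add: algebra_simps)
    moreover have "(a - c) * (d0 - u) \<ge> 0 \<or> (c - b) * (u - d1) \<ge> 0"
      using 3 assms(3) by auto
    ultimately show ?thesis using 3 at_a at_b interp by auto
  qed
qed

locale strict_grid =
  fixes xs :: "nat \<Rightarrow> real" and J :: nat
  assumes grid_step_less: "j < J \<Longrightarrow> xs j < xs (Suc j)"
begin

lemma grid_less: "i < k \<Longrightarrow> k \<le> J \<Longrightarrow> xs i < xs k"
  by (rule lift_Suc_mono_less_ivl[of "{..<J}"]) (auto intro: grid_step_less)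

lemma grid_le: "i \<le> k \<Longrightarrow> k \<le> J \<Longrightarrow> xs i \<le> xs k"
  using grid_less[of i k] by (cases "i = k") auto

lemma grid_eq_iff: "i \<le> J \<Longrightarrow> k \<le> J \<Longrightarrow> xs i = xs k \<longleftrightarrow> i = k"
  using grid_less[of i k] grid_less[of k i] by (cases i k rule: linorder_cases) auto

lemma node_outside_cell:
  assumes "j < J" "k \<le> J"
  shows "xs k \<le> xs j \<or> xs (Suc j) \<le> xs k"
  using assms grid_le[of k j] grid_le[of "Suc j" k] by linarith

lemma cell_not_node:
  assumes "j < J" "xs j < x" "x < xs (Suc j)"
  shows "\<not> (\<exists>k\<le>J. x = xs k)"
proof
  assume "\<exists>k\<le>J. x = xs k"
  then obtain k where "k \<le> J" "x = xs k" by blast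
  with node_outside_cell[OF assms(1)] assms(2,3) show False by fastforce
qed

lemma cell_unique:
  assumes "j < J" "xs j < x" "x < xs (Suc j)" "i < J" "xs i \<le> x" "x \<le> xs (Suc i)"
  shows "i = j"
proof (cases i j rule: linorder_cases)
  case less
  then show ?thesis using grid_le[of "Suc i" j] assms by simp
next
  case greater
  then show ?thesis using grid_le[of "Suc j" i] assms by simp
qed

lemma node_or_cell:
  assumes "xs 0 \<le> x" "x \<le> xs J"
  shows "(\<exists>k\<le>J. x = xs k) \<or> (\<exists>j<J. xs j < x \<and> x < xs (Suc j))"
proof -
  define k where "k = Max {k. k \<le> J \<and> xs k \<le> x}"
  have fin: "finite {k. k \<le> J \<and> xs k \<le> x}" by simp
  have "k \<le> J \<and> xs k \<le> x"
    unfolding k_def using Max_in[OF fin] assms(1) by blast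
  moreover have above: "x < xs i" if "k < i" "i \<le> J" for i
    using Max_ge[OF fin, of i] that unfolding k_def[symmetric] by force
  ultimately show ?thesis
  proof (cases "x = xs k")
    case False
    with \<open>k \<le> J \<and> xs k \<le> x\<close> assms(2) have "k < J" "xs k < x"
      by (auto simp: le_less)
    then show ?thesis using above[of "Suc k"] by auto
  qed auto
qed

lemma some_node_index:
  assumes "k \<le> J"
  shows "(SOME i. i \<le> J \<and> xs k = xs i) = k"
  by (rule some_equality) (use assms grid_eq_iff in auto)

lemma some_cell_index:
  assumes "j < J" "xs j < x" "x < xs (Suc j)" "\<And>i. P i \<Longrightarrow> i < J \<and> xs i \<le> x \<and> x \<le> xs (Suc i)"
    and "P j"
  shows "(SOME i. P i) = j"
  using assms(5) by (rule some_equality) (use assms cell_unique in blast)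

lemma lin_interp_node: "k \<le> J \<Longrightarrow> lin_interp xs J h (xs k) = h k"
  unfolding lin_interp_def by (auto simp: some_node_index)

lemma mixed_interp_node: "k \<le> J \<Longrightarrow> mixed_interp xs J d u (xs k) = d k"
  unfolding mixed_interp_def by (auto simp: some_node_index)

lemma lin_interp_cell:
  assumes "j < J" "xs j < x" "x < xs (Suc j)"
  shows "lin_interp xs J h x = (xs (Suc j) - x) / (xs (Suc j) - xs j) * h j
                              + (x - xs j) / (xs (Suc j) - xs j) * h (Suc j)"
  using assms some_cell_index[OF assms, of "\<lambda>i. i < J \<and> xs i \<le> x \<and> x \<le> xs (Suc i)"]
  unfolding lin_interp_def if_not_P[OF cell_not_node[OF assms]] by simp

lemma mixed_interp_cell:
  assumes "j < J" "xs j < x" "x < xs (Suc j)"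
  shows "mixed_interp xs J d u x =
           (if d j \<le> u j then d j else if u j \<le> d (Suc j) then d (Suc j) else u j)"
  using assms some_cell_index[OF assms, of "\<lambda>i. i < J \<and> xs i < x \<and> x < xs (Suc i)"]
  unfolding mixed_interp_def if_not_P[OF cell_not_node[OF assms]] by simp

lemma lin_interp_convex_combination:
  assumes "xs 0 \<le> y" "y \<le> xs J"
  obtains i k t where "i \<le> J" "k \<le> J" "0 \<le> t" "t \<le> 1"
    "lin_interp xs J h y = (1 - t) * h i + t * h k" "y = (1 - t) * xs i + t * xs k"
  using node_or_cell[OF assms]
proof
  assume "\<exists>k\<le>J. y = xs k"
  then obtain k where "k \<le> J" "y = xs k" by blast
  then show thesis using that[of k k 0] by (simp add: lin_interp_node)
next
  assume "\<exists>j<J. xs j < y \<and> y < xs (Suc j)"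
  then obtain j where j: "j < J" "xs j < y" "y < xs (Suc j)" by blast
  define t where "t = (y - xs j) / (xs (Suc j) - xs j)"
  have "1 - t = (xs (Suc j) - y) / (xs (Suc j) - xs j)" "t * (xs (Suc j) - xs j) = y - xs j"
    using j by (auto simp: t_def field_simps)
  then have "y = (1 - t) * xs j + t * xs (Suc j)"
    by (simp add: algebra_simps)
  moreover have "0 \<le> t" "t \<le> 1" using j by (auto simp: t_def)
  moreover have "lin_interp xs J h y = (1 - t) * h j + t * h (Suc j)"
    using j \<open>1 - t = _\<close> unfolding lin_interp_cell[OF j] t_def by simp
  ultimately show thesis
    using that[of j "Suc j" t] j by simp
qed

lemma lin_interp_nonneg_if_nodes:
  assumes nodes: "\<And>k. k \<le> J \<Longrightarrow> A + E k + (xs k - x) * D \<ge> 0"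
    and "xs 0 \<le> y" "y \<le> xs J"
  shows "A + lin_interp xs J E y + (y - x) * D \<ge> 0"
proof -
  obtain i k t where "i \<le> J" "k \<le> J" "0 \<le> t" "t \<le> 1"
    and E: "lin_interp xs J E y = (1 - t) * E i + t * E k" and y: "y = (1 - t) * xs i + t * xs k"
    using lin_interp_convex_combination[OF assms(2,3)] .
  have "A + lin_interp xs J E y + (y - x) * D
          = (1 - t) * (A + E i + (xs i - x) * D) + t * (A + E k + (xs k - x) * D)"
    unfolding E by (subst y) (simp add: algebra_simps)
  also have "\<dots> \<ge> 0"
    using nodes[OF \<open>i \<le> J\<close>] nodes[OF \<open>k \<le> J\<close>] \<open>0 \<le> t\<close> \<open>t \<le> 1\<close> by simp
  finally show ?thesis .
qed

lemma interp_constraint_nonneg: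
  assumes nodes: "\<And>j k. j \<le> J \<Longrightarrow> k \<le> J \<Longrightarrow> Ea j + Eb k + (xs k - xs j) * d j \<ge> 0"
    and x: "xs 0 \<le> x" "x \<le> xs J" and y: "xs 0 \<le> y" "y \<le> xs J"
  shows "lin_interp xs J Ea x + lin_interp xs J Eb y
           + (y - x) * mixed_interp xs J d (\<lambda>j. (Ea (Suc j) - Ea j) / (xs (Suc j) - xs j)) x \<ge> 0"
proof (rule lin_interp_nonneg_if_nodes[OF _ y])
  fix k assume k: "k \<le> J"
  show "lin_interp xs J Ea x + Eb k
          + (xs k - x) * mixed_interp xs J d (\<lambda>j. (Ea (Suc j) - Ea j) / (xs (Suc j) - xs j)) x \<ge> 0"
    using node_or_cell[OF x]
  proof
    assume "\<exists>j\<le>J. x = xs j"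
    then obtain j where "j \<le> J" "x = xs j" by blast
    then show ?thesis using nodes[OF _ k] by (simp add: lin_interp_node mixed_interp_node)
  next
    assume "\<exists>j<J. xs j < x \<and> x < xs (Suc j)"
    then obtain j where j: "j < J" "xs j < x" "x < xs (Suc j)" by blast
    show ?thesis
      unfolding lin_interp_cell[OF j] mixed_interp_cell[OF j]
      using mixed_choice_nonneg[OF j(2,3) node_outside_cell[OF j(1) k]
          nodes[OF less_imp_le[OF j(1)] k] nodes[OF Suc_leI[OF j(1)] k]] .
  qed
qed

end

theorem mainTheorem7:
  fixes xs :: "nat \<Rightarrow> real" and J N :: nat
    and e1 e2 v d1 d2 :: "nat \<Rightarrow> nat \<Rightarrow> real"
  assumes x0: "xs 0 = 0"
    and xmono: "\<And>j. j < J \<Longrightarrow> xs j < xs (Suc j)"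
    and N1: "N \<ge> 1"
    and ii: "\<And>j k n. j \<le> J \<Longrightarrow> k \<le> J \<Longrightarrow> 1 \<le> n \<Longrightarrow> n \<le> N - 1 \<Longrightarrow>
               e1 j n + e2 k (n + 1) + (xs k - xs j) * d1 j n \<ge> 0"
    and iii: "\<And>j k n. j \<le> J \<Longrightarrow> k \<le> J \<Longrightarrow> 1 \<le> n \<Longrightarrow> n \<le> N - 1 \<Longrightarrow>
               e1 j n + e2 k (n + 1) + (xs k - xs j) * d2 j n - v j n + v k (n + 1) \<ge> 0"
    and n: "1 \<le> n" "n \<le> N - 1"
    and x: "0 \<le> x" "x \<le> xs J"
    and y: "0 \<le> y" "y \<le> xs J"
  shows "lin_interp xs J (\<lambda>j. e1 j n) x + lin_interp xs J (\<lambda>j. e2 j (n + 1)) y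
           + (y - x) * mixed_interp xs J (\<lambda>j. d1 j n)
                 (\<lambda>j. (e1 (Suc j) n - e1 j n) / (xs (Suc j) - xs j)) x \<ge> 0
       \<and> lin_interp xs J (\<lambda>j. e1 j n) x + lin_interp xs J (\<lambda>j. e2 j (n + 1)) y
           + (y - x) * mixed_interp xs J (\<lambda>j. d2 j n)
                 (\<lambda>j. ((e1 (Suc j) n - v (Suc j) n) - (e1 j n - v j n)) / (xs (Suc j) - xs j)) x
           - lin_interp xs J (\<lambda>j. v j n) x + lin_interp xs J (\<lambda>j. v j (n + 1)) y \<ge> 0"
proof -
  interpret strict_grid xs J by unfold_locales (rule xmono)
  have x': "xs 0 \<le> x" and y': "xs 0 \<le> y" using x0 x y by simp_all
  have nodes1: "e1 j n + e2 k (n + 1) + (xs k - xs j) * d1 j n \<ge> 0"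
    if "j \<le> J" "k \<le> J" for j k
    using ii[OF that n] .
  have nodes2: "(e1 j n - v j n) + (e2 k (n + 1) + v k (n + 1)) + (xs k - xs j) * d2 j n \<ge> 0"
    if "j \<le> J" "k \<le> J" for j k
    using iii[OF that n] by linarith
  note first = interp_constraint_nonneg[OF nodes1 x' x(2) y' y(2)]
  note second = interp_constraint_nonneg[OF nodes2 x' x(2) y' y(2), unfolded lin_interp_add lin_interp_diff]
  show ?thesis
    using first second by linarith
qed

end
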